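(* Let $k\ge3$ and let $G,H$ be $2$-connected graphs. Let $u,v\in V(G)$ and $u',v'\in V(H)$ be such that $G-\{u,v\}$ is disconnected and $H-\{u',v'\}$ is connected. Then $\chi^k_G(u,v)\ne\chi^k_H(u',v')$.
   Context: Graphs are finite, simple, undirected (possibly colored). A graph is $2$-connected if it has more than $2$ vertices and removing any one vertex leaves it connected. For $k\ge2$, the $k$-dimensional Weisfeiler–Leman algorithm computes a coloring of $V(G)^k$: the initial color of a tuple consists of its input color and the isomorphism type of the ordered induced subgraph on its entries; in each round the new color of $\bar v$ is the pair of its old color and the multiset, over $w\in V(G)$, of the $k$-tuples whose $i$-th component is the old color of $\bar v$ with its $i$-th entry replaced by $w$; the stable coloring is $\chi^k_G$, with canonical colors comparable across graphs. For $\ell<k$, $\chi^k_G(u_1,\dots,u_\ell):=\chi^k_G(u_1,\dots,u_\ell,u_\ell,\dots,u_\ell)$. *)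

theory Defs
  imports Main "HOL-Library.Multiset"
begin

definition graph :: "'a set \<Rightarrow> ('a \<Rightarrow> 'a \<Rightarrow> bool) \<Rightarrow> bool" where
  "graph V E \<longleftrightarrow> finite V \<and> (\<forall>x y. E x y \<longrightarrow> x \<in> V \<and> y \<in> V \<and> x \<noteq> y \<and> E y x)"

definition connected_on :: "'a set \<Rightarrow> ('a \<Rightarrow> 'a \<Rightarrow> bool) \<Rightarrow> bool" where
  "connected_on S E \<longleftrightarrow>
     (\<forall>x\<in>S. \<forall>y\<in>S. (x, y) \<in> {(a, b). a \<in> S \<and> b \<in> S \<and> E a b}\<^sup>*)"

definition two_connected :: "'a set \<Rightarrow> ('a \<Rightarrow> 'a \<Rightarrow> bool) \<Rightarrow> bool" where
  "two_connected V E \<longleftrightarrow> card V > 2 \<and> (\<forall>x\<in>V. connected_on (V - {x}) E)"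

text \<open>Canonical WL colours (comparable across graphs): the initial colour of a tuple
is the list of input colours together with its atomic type (equality and adjacency
pattern of its entries); a refined colour is the pair of the old colour and the
multiset over w of the tuples of old colours of the tuples with the i-th entry
replaced by w.\<close>

datatype 'c wlcol =
    Init "'c list" "(bool \<times> bool) list list"
  | Refine "'c wlcol" "'c wlcol list multiset"

definition atp :: "('a \<Rightarrow> 'a \<Rightarrow> bool) \<Rightarrow> 'a list \<Rightarrow> (bool \<times> bool) list list" where
  "atp E vs = map (\<lambda>i. map (\<lambda>j. (vs ! i = vs ! j, E (vs ! i) (vs ! j))) [0..<length vs]) [0..<length vs]"

fun wl_round :: "'a set \<Rightarrow> ('a \<Rightarrow> 'a \<Rightarrow> bool) \<Rightarrow> ('a \<Rightarrow> 'c) \<Rightarrow> nat \<Rightarrow> 'a list \<Rightarrow> 'c wlcol" where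
  "wl_round V E col 0 vs = Init (map col vs) (atp E vs)"
| "wl_round V E col (Suc n) vs =
     Refine (wl_round V E col n vs)
       (image_mset (\<lambda>w. map (\<lambda>i. wl_round V E col n (vs[i := w])) [0..<length vs]) (mset_set V))"

text \<open>Stable colour: two tuples (possibly in different graphs) get the same stable
colour iff they get the same colour in every round. We represent the stable colour
as the whole sequence of round colours.\<close>
definition wl_stable :: "'a set \<Rightarrow> ('a \<Rightarrow> 'a \<Rightarrow> bool) \<Rightarrow> ('a \<Rightarrow> 'c) \<Rightarrow> 'a list \<Rightarrow> nat \<Rightarrow> 'c wlcol" where
  "wl_stable V E col vs = (\<lambda>n. wl_round V E col n vs)"

text \<open>chi^k of an l-tuple (l \<le> k, l \<ge> 1): pad with copies of the last entry.\<close>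
definition wl_color :: "'a set \<Rightarrow> ('a \<Rightarrow> 'a \<Rightarrow> bool) \<Rightarrow> ('a \<Rightarrow> 'c) \<Rightarrow> nat \<Rightarrow> 'a list \<Rightarrow> nat \<Rightarrow> 'c wlcol" where
  "wl_color V E col k us = wl_stable V E col (us @ replicate (k - length us) (last us))"

end

theory Submission
  imports Defs "HOL-Computational_Algebra.Formal_Power_Series"
begin

(* Let W_S(x,y) be the generating function of walks from x to y in G - S. Splitting a walk
   at its first visit to v gives
     W_u(x,y) W_u(v,v) = W_{u,v}(x,y) W_u(v,v) + W_u(x,v) W_u(v,y),
   and since W_u(v,v) has constant term 1, the identity W_u(x,y) W_u(v,v) = W_u(x,v) W_u(v,y)
   holds exactly when x and y are disconnected in G - {u,v}. The k-WL colour of a k-tuple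
   with three positions p, q, r determines the walk counts from its q-th to its r-th entry
   avoiding its p-th entry, and equal colours of (u,v) let every choice of x, y in G be
   matched by x', y' in H with the same four generating functions. So the identity for a
   disconnected pair in G - {u,v} would be inherited by a pair x', y' in H - {u',v'}. *)

section \<open>Walk counts avoiding a set\<close>

abbreviation induced_edges :: "'a set \<Rightarrow> ('a \<Rightarrow> 'a \<Rightarrow> bool) \<Rightarrow> ('a \<times> 'a) set" where
  "induced_edges S E \<equiv> {(a, b). a \<in> S \<and> b \<in> S \<and> E a b}"

fun walk_count :: "'a set \<Rightarrow> ('a \<Rightarrow> 'a \<Rightarrow> bool) \<Rightarrow> 'a set \<Rightarrow> nat \<Rightarrow> 'a \<Rightarrow> 'a \<Rightarrow> nat" where
  "walk_count V E S 0 x y = (if x = y \<and> x \<in> V \<and> x \<notin> S then 1 else 0)"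
| "walk_count V E S (Suc n) x y =
     (if x \<in> V \<and> x \<notin> S then (\<Sum>z\<in>V. if E x z then walk_count V E S n z y else 0) else 0)"

fun first_passage_count :: "'a set \<Rightarrow> ('a \<Rightarrow> 'a \<Rightarrow> bool) \<Rightarrow> 'a set \<Rightarrow> 'a \<Rightarrow> nat \<Rightarrow> 'a \<Rightarrow> nat" where
  "first_passage_count V E S v 0 x = (if x = v then 1 else 0)"
| "first_passage_count V E S v (Suc n) x =
     (if x \<in> V \<and> x \<notin> insert v S
      then (\<Sum>z\<in>V. if E x z then first_passage_count V E S v n z else 0) else 0)"

lemma walk_count_pos_imp_mem: "walk_count V E S n x y > 0 \<Longrightarrow> x \<in> V \<and> x \<notin> S"
  by (cases n) (auto split: if_splits)

lemma walk_count_end_in_avoided: "y \<in> S \<Longrightarrow> walk_count V E S n x y = 0"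
  by (induction n arbitrary: x) (auto intro!: sum.neutral)

lemma walk_count_pos_imp_reachable:
  "walk_count V E S n x y > 0 \<Longrightarrow> (x, y) \<in> (induced_edges (V - S) E)\<^sup>*"
proof (induction n arbitrary: x)
  case 0
  then show ?case by (simp split: if_splits)
next
  case (Suc n)
  have x: "x \<in> V" "x \<notin> S" using walk_count_pos_imp_mem[OF Suc.prems] by auto
  with Suc.prems have "(\<Sum>z\<in>V. if E x z then walk_count V E S n z y else 0) \<noteq> 0" by simp
  then obtain z where "z \<in> V" "(if E x z then walk_count V E S n z y else 0) \<noteq> 0"
    by (rule sum.not_neutral_contains_not_neutral)
  then have z: "z \<in> V" "E x z" "walk_count V E S n z y > 0" by (auto split: if_splits)
  have "z \<notin> S" using walk_count_pos_imp_mem[OF z(3)] by blast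
  with x z have "(x, z) \<in> induced_edges (V - S) E" by auto
  then show ?case using Suc.IH[OF z(3)] by (rule converse_rtrancl_into_rtrancl)
qed

lemma reachable_imp_walk_count_pos:
  assumes "(x, y) \<in> (induced_edges (V - S) E)\<^sup>*" "x \<in> V - S" "finite V"
  shows "\<exists>n. walk_count V E S n x y > 0"
  using assms(1,2)
proof (induction rule: converse_rtrancl_induct)
  case base
  then show ?case by (intro exI[of _ 0]) auto
next
  case (step x z)
  then obtain n where n: "walk_count V E S n z y > 0" by auto
  have e: "x \<in> V" "x \<notin> S" "E x z" "z \<in> V" using step(1) by auto
  have "walk_count V E S n z y \<le> (\<Sum>z\<in>V. if E x z then walk_count V E S n z y else 0)"
    using member_le_sum[of z V "\<lambda>z. if E x z then walk_count V E S n z y else 0"] e assms(3)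
    by simp
  with n e have "walk_count V E S (Suc n) x y > 0" by simp
  then show ?case by blast
qed

lemma walk_count_first_passage_decomp:
  assumes "v \<in> V" "v \<notin> S"
  shows "walk_count V E S n x y = walk_count V E (insert v S) n x y
           + (\<Sum>i\<le>n. first_passage_count V E S v i x * walk_count V E S (n - i) v y)"
proof (induction n arbitrary: x)
  case 0
  then show ?case using assms by auto
next
  case (Suc n)
  show ?case
  proof (cases "x \<in> V \<and> x \<notin> insert v S")
    case True
    have "walk_count V E S (Suc n) x y = (\<Sum>z\<in>V. if E x z then walk_count V E S n z y else 0)"
      using True by simp
    also have "\<dots> = (\<Sum>z\<in>V. (if E x z then walk_count V E (insert v S) n z y else 0)
        + (\<Sum>i\<le>n. (if E x z then first_passage_count V E S v i z else 0)
                    * walk_count V E S (n - i) v y))"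
      by (rule sum.cong) (auto simp: Suc.IH)
    also have "\<dots> = (\<Sum>z\<in>V. if E x z then walk_count V E (insert v S) n z y else 0)
        + (\<Sum>i\<le>n. (\<Sum>z\<in>V. if E x z then first_passage_count V E S v i z else 0)
                    * walk_count V E S (n - i) v y)"
      unfolding sum.distrib by (subst sum.swap) (simp add: sum_distrib_right)
    also have "\<dots> = walk_count V E (insert v S) (Suc n) x y
        + (\<Sum>i\<le>Suc n. first_passage_count V E S v i x * walk_count V E S (Suc n - i) v y)"
      unfolding sum.atMost_Suc_shift using True by simp
    finally show ?thesis .
  next
    case False
    then have "\<And>i. first_passage_count V E S v (Suc i) x = 0" by auto
    then have shift: "(\<Sum>i\<le>Suc n. first_passage_count V E S v i x * walk_count V E S (Suc n - i) v y)
        = first_passage_count V E S v 0 x * walk_count V E S (Suc n) v y"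
      unfolding sum.atMost_Suc_shift by (simp del: first_passage_count.simps)
    show ?thesis
    proof (cases "x = v")
      case True
      have "walk_count V E (insert v S) (Suc n) v y = 0" by simp
      with shift True show ?thesis by (simp del: walk_count.simps)
    next
      case x_ne_v: False
      with False have "walk_count V E S (Suc n) x y = 0" "walk_count V E (insert v S) (Suc n) x y = 0"
        by auto
      with shift x_ne_v show ?thesis by (simp del: walk_count.simps)
    qed
  qed
qed

section \<open>Walk generating functions\<close>

definition walk_gf :: "'a set \<Rightarrow> ('a \<Rightarrow> 'a \<Rightarrow> bool) \<Rightarrow> 'a set \<Rightarrow> 'a \<Rightarrow> 'a \<Rightarrow> nat fps" where
  "walk_gf V E S x y = Abs_fps (\<lambda>n. walk_count V E S n x y)"

lemma walk_gf_eq_0_iff: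
  assumes "finite V" "x \<in> V - S"
  shows "walk_gf V E S x y = 0 \<longleftrightarrow> (x, y) \<notin> (induced_edges (V - S) E)\<^sup>*"
proof -
  have "walk_gf V E S x y = 0 \<longleftrightarrow> \<not> (\<exists>n. walk_count V E S n x y > 0)"
    by (simp add: walk_gf_def fps_eq_iff)
  also have "\<dots> \<longleftrightarrow> (x, y) \<notin> (induced_edges (V - S) E)\<^sup>*"
    using walk_count_pos_imp_reachable[of V E S _ x y]
      reachable_imp_walk_count_pos[OF _ assms(2,1), of y E] by auto
  finally show ?thesis .
qed

lemma walk_gf_closed_nonzero:
  assumes "v \<in> V - S"
  shows "walk_gf V E S v v \<noteq> 0"
proof
  assume "walk_gf V E S v v = 0"
  then have "fps_nth (walk_gf V E S v v) 0 = 0" by simp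
  with assms show False by (simp add: walk_gf_def)
qed

lemma walk_gf_first_passage_decomp:
  assumes "v \<in> V" "v \<notin> S"
  shows "walk_gf V E S x y
           = walk_gf V E (insert v S) x y + Abs_fps (\<lambda>n. first_passage_count V E S v n x) * walk_gf V E S v y"
proof (rule fps_ext)
  fix n
  show "fps_nth (walk_gf V E S x y) n = fps_nth (walk_gf V E (insert v S) x y
      + Abs_fps (\<lambda>n. first_passage_count V E S v n x) * walk_gf V E S v y) n"
    using walk_count_first_passage_decomp[OF assms, of E n x y]
    by (simp add: walk_gf_def fps_mult_nth atLeast0AtMost del: walk_count.simps first_passage_count.simps)
qed

lemma walk_gf_first_passage_identity:
  assumes "v \<in> V" "v \<notin> S"
  shows "walk_gf V E S x y * walk_gf V E S v v
           = walk_gf V E (insert v S) x y * walk_gf V E S v v + walk_gf V E S x v * walk_gf V E S v y"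
proof -
  define F where "F = Abs_fps (\<lambda>n. first_passage_count V E S v n x)"
  have "walk_gf V E (insert v S) x v = 0"
    by (rule fps_ext) (simp add: walk_gf_def walk_count_end_in_avoided)
  then have "walk_gf V E S x v = F * walk_gf V E S v v"
    using walk_gf_first_passage_decomp[OF assms, of E x v] by (simp add: F_def)
  then show ?thesis
    using walk_gf_first_passage_decomp[OF assms, of E x y]
    by (simp add: F_def ring_distribs mult_ac)
qed

lemma walk_gf_product_identity_iff_separated:
  assumes "finite V" "v \<in> V - S" "x \<in> V - insert v S"
  shows "walk_gf V E S x y * walk_gf V E S v v = walk_gf V E S x v * walk_gf V E S v y
           \<longleftrightarrow> (x, y) \<notin> (induced_edges (V - insert v S) E)\<^sup>*"
proof -
  have "walk_gf V E S x y * walk_gf V E S v v = walk_gf V E S x v * walk_gf V E S v y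
          \<longleftrightarrow> walk_gf V E (insert v S) x y * walk_gf V E S v v = 0"
    using walk_gf_first_passage_identity[of v V S E x y] assms(2) by auto
  also have "\<dots> \<longleftrightarrow> walk_gf V E (insert v S) x y = 0"
    using walk_gf_closed_nonzero[OF assms(2)] by simp
  also have "\<dots> \<longleftrightarrow> (x, y) \<notin> (induced_edges (V - insert v S) E)\<^sup>*"
    using walk_gf_eq_0_iff[OF assms(1,3)] .
  finally show ?thesis .
qed

section \<open>Weisfeiler--Leman colours\<close>

lemma wl_round_eq_mono:
  "n \<le> m \<Longrightarrow> wl_round V E c m s = wl_round V' E' c' m s' \<Longrightarrow> wl_round V E c n s = wl_round V' E' c' n s'"
  by (induction m) (auto simp: le_Suc_eq)

lemma wl_round_eq_atp: "wl_round V E c m s = wl_round V' E' c' m s' \<Longrightarrow> atp E s = atp E' s'"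
  using wl_round_eq_mono[of 0 m V E c s V' E' c' s'] by simp

lemma length_atp: "length (atp E s) = length s"
  by (simp add: atp_def)

lemma atp_eqD:
  assumes "atp E s = atp E' s'" "i < length s" "j < length s"
  shows "length s' = length s" "s ! i = s ! j \<longleftrightarrow> s' ! i = s' ! j"
    "E (s ! i) (s ! j) \<longleftrightarrow> E' (s' ! i) (s' ! j)"
proof -
  show l: "length s' = length s" using arg_cong[OF assms(1), of length] by (simp add: length_atp)
  have "atp E s ! i ! j = atp E' s' ! i ! j" using assms(1) by simp
  then show "s ! i = s ! j \<longleftrightarrow> s' ! i = s' ! j" "E (s ! i) (s ! j) \<longleftrightarrow> E' (s' ! i) (s' ! j)"
    using assms(2,3) l by (simp_all add: atp_def)
qed

lemma wl_stable_eq_atp: "wl_stable V E c s = wl_stable V' E' c' s' \<Longrightarrow> atp E s = atp E' s'"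
  by (metis wl_round_eq_atp wl_stable_def)

lemma sum_eq_if_image_mset_eq:
  assumes "finite A" "finite B" "image_mset \<phi> (mset_set A) = image_mset \<psi> (mset_set B)"
    and "\<And>a b. a \<in> A \<Longrightarrow> b \<in> B \<Longrightarrow> \<phi> a = \<psi> b \<Longrightarrow> f a = g b"
  shows "sum f A = sum g B"
  using assms
proof (induction A arbitrary: B rule: finite_induct)
  case empty
  then show ?case by (simp add: mset_set_empty_iff)
next
  case (insert a A)
  have "\<phi> a \<in># image_mset \<psi> (mset_set B)"
    using insert.prems(2) insert.hyps by (metis image_mset_add_mset mset_set.insert union_single_eq_member)
  then obtain b where b: "b \<in> B" "\<psi> b = \<phi> a" using insert.prems(1) by auto
  have "image_mset \<phi> (mset_set A) = image_mset \<psi> (mset_set (B - {b}))"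
    using insert b by (simp add: mset_set.remove)
  then have "sum f A = sum g (B - {b})"
    using insert.IH insert.prems by auto
  moreover have "f a = g b" using insert.prems b by auto
  ultimately show ?case using insert b by (simp add: sum.remove)
qed

text \<open>The round at which a candidate partner fails is bounded over the finite set \<open>V'\<close>;
  one round later the refinement multisets still agree and produce a partner failing nowhere.\<close>

lemma wl_stable_eq_extend:
  assumes fin: "finite V" "finite V'"
    and eq: "wl_stable V E c s = wl_stable V' E' c' s'" and w: "w \<in> V"
  obtains w' where "w' \<in> V'"
    "\<And>i. i < length s \<Longrightarrow> wl_stable V E c (s[i := w]) = wl_stable V' E' c' (s'[i := w'])"
proof -
  have "\<exists>w'\<in>V'. \<forall>m. \<forall>i<length s. wl_round V E c m (s[i := w]) = wl_round V' E' c' m (s'[i := w'])"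
  proof (rule ccontr)
    assume "\<not> ?thesis"
    then obtain mm ii where mm: "\<And>w'. w' \<in> V' \<Longrightarrow> ii w' < length s \<and>
        wl_round V E c (mm w') (s[ii w' := w]) \<noteq> wl_round V' E' c' (mm w') (s'[ii w' := w'])"
      by metis
    define M where "M = Max (mm ` V')"
    have "wl_round V E c (Suc M) s = wl_round V' E' c' (Suc M) s'"
      using eq by (metis wl_stable_def)
    then have "image_mset (\<lambda>w. map (\<lambda>i. wl_round V E c M (s[i := w])) [0..<length s]) (mset_set V)
        = image_mset (\<lambda>w. map (\<lambda>i. wl_round V' E' c' M (s'[i := w])) [0..<length s']) (mset_set V')"
      by simp
    moreover have "map (\<lambda>i. wl_round V E c M (s[i := w])) [0..<length s]
        \<in># image_mset (\<lambda>w. map (\<lambda>i. wl_round V E c M (s[i := w])) [0..<length s]) (mset_set V)"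
      using imageI[OF w] fin(1) by simp
    ultimately obtain w' where w': "w' \<in> V'" and lists:
      "map (\<lambda>i. wl_round V' E' c' M (s'[i := w'])) [0..<length s']
        = map (\<lambda>i. wl_round V E c M (s[i := w])) [0..<length s]"
      using fin(2) by auto
    have "length s' = length s" using arg_cong[OF lists, of length] by simp
    then have "wl_round V E c M (s[ii w' := w]) = wl_round V' E' c' M (s'[ii w' := w'])"
      using arg_cong[OF lists, of "\<lambda>l. l ! ii w'"] mm[OF w'] by simp
    moreover have "mm w' \<le> M" using fin(2) w' by (simp add: M_def)
    ultimately show False using mm[OF w'] wl_round_eq_mono by blast
  qed
  then show ?thesis using that by (auto simp: wl_stable_def)
qed

lemma wl_round_eq_walk_count:
  assumes "finite V" "finite V'" "wl_round V E c m s = wl_round V' E' c' m s'"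
    and "set s \<subseteq> V" "set s' \<subseteq> V'" "p < length s" "q < length s" "r < length s" "p \<noteq> q" "q \<noteq> r"
  shows "walk_count V E {s ! p} m (s ! q) (s ! r) = walk_count V' E' {s' ! p} m (s' ! q) (s' ! r)"
  using assms(3-)
proof (induction m arbitrary: s s')
  case 0
  have a: "atp E s = atp E' s'" using wl_round_eq_atp[OF "0.prems"(1)] .
  have "length s' = length s" using atp_eqD(1)[OF a] "0.prems" by blast
  then have "s ! q \<in> V" "s' ! q \<in> V'" using "0.prems" by auto
  moreover have "s ! q = s ! r \<longleftrightarrow> s' ! q = s' ! r" "s ! q = s ! p \<longleftrightarrow> s' ! q = s' ! p"
    using atp_eqD(2)[OF a] "0.prems" by auto
  ultimately show ?case by auto
next
  case (Suc m)
  \<comment> \<open>The refinement multiset matches each \<open>z\<close> with a \<open>z'\<close>: putting it at position \<open>p\<close>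
     exposes the edge to \<open>s ! q\<close>, putting it at position \<open>q\<close> advances the walk.\<close>
  have a: "atp E s = atp E' s'" using wl_round_eq_atp[OF Suc.prems(1)] .
  have l: "length s' = length s" using atp_eqD(1)[OF a] Suc.prems by blast
  have sums: "(\<Sum>z\<in>V. if E (s ! q) z then walk_count V E {s ! p} m z (s ! r) else 0)
      = (\<Sum>z\<in>V'. if E' (s' ! q) z then walk_count V' E' {s' ! p} m z (s' ! r) else 0)"
  proof (rule sum_eq_if_image_mset_eq[OF assms(1,2)])
    show "image_mset (\<lambda>w. map (\<lambda>i. wl_round V E c m (s[i := w])) [0..<length s]) (mset_set V)
        = image_mset (\<lambda>w. map (\<lambda>i. wl_round V' E' c' m (s'[i := w])) [0..<length s]) (mset_set V')"
      using Suc.prems(1) l by simp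
  next
    fix z z' assume z: "z \<in> V" "z' \<in> V'" and lists:
      "map (\<lambda>i. wl_round V E c m (s[i := z])) [0..<length s]
        = map (\<lambda>i. wl_round V' E' c' m (s'[i := z'])) [0..<length s]"
    have round_at: "wl_round V E c m (s[i := z]) = wl_round V' E' c' m (s'[i := z'])"
      if "i < length s" for i
      using arg_cong[OF lists, of "\<lambda>l. l ! i"] that by simp
    have "E (s[p := z] ! q) (s[p := z] ! p) \<longleftrightarrow> E' (s'[p := z'] ! q) (s'[p := z'] ! p)"
      using atp_eqD(3)[OF wl_round_eq_atp[OF round_at[of p]]] Suc.prems by force
    then have edge: "E (s ! q) z \<longleftrightarrow> E' (s' ! q) z'"
      using Suc.prems l by (simp add: nth_list_update)
    have "set (s[q := z]) \<subseteq> V" "set (s'[q := z']) \<subseteq> V'"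
      using Suc.prems z by (auto dest: set_update_subset_insert[THEN subsetD])
    then have "walk_count V E {s ! p} m z (s ! r) = walk_count V' E' {s' ! p} m z' (s' ! r)"
      using Suc.IH[OF round_at[of q]] Suc.prems l by auto
    with edge show "(if E (s ! q) z then walk_count V E {s ! p} m z (s ! r) else 0)
        = (if E' (s' ! q) z' then walk_count V' E' {s' ! p} m z' (s' ! r) else 0)" by simp
  qed
  have "s ! q \<in> V" "s' ! q \<in> V'" using Suc.prems l by auto
  moreover have "s ! q = s ! p \<longleftrightarrow> s' ! q = s' ! p" using atp_eqD(2)[OF a] Suc.prems by auto
  ultimately show ?case using sums by simp
qed

lemma wl_stable_eq_walk_gf:
  assumes "finite V" "finite V'" "wl_stable V E c s = wl_stable V' E' c' s'"
    and "set s \<subseteq> V" "set s' \<subseteq> V'" "p < length s" "q < length s" "r < length s" "p \<noteq> q" "q \<noteq> r"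
  shows "walk_gf V E {s ! p} (s ! q) (s ! r) = walk_gf V' E' {s' ! p} (s' ! q) (s' ! r)"
proof (rule fps_ext)
  fix n
  have "wl_round V E c n s = wl_round V' E' c' n s'"
    using assms(3) by (simp add: wl_stable_def fun_eq_iff)
  then show "fps_nth (walk_gf V E {s ! p} (s ! q) (s ! r)) n
      = fps_nth (walk_gf V' E' {s' ! p} (s' ! q) (s' ! r)) n"
    using wl_round_eq_walk_count[OF assms(1,2)] assms(4-) by (simp add: walk_gf_def)
qed

lemma wl_stable_eq_transfer_walk_gfs:
  assumes fin: "finite V" "finite V'"
    and eq: "wl_stable V E c (u # v # v # t) = wl_stable V' E' c' (u' # v' # v' # t')"
    and sub: "set (u # v # t) \<subseteq> V" "set (u' # v' # t') \<subseteq> V'"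
    and xy: "x \<in> V - {u, v}" "y \<in> V - {u, v}"
  obtains x' y' where "x' \<in> V' - {u', v'}" "y' \<in> V' - {u', v'}"
    "walk_gf V E {u} v v = walk_gf V' E' {u'} v' v'"
    "walk_gf V E {u} x v = walk_gf V' E' {u'} x' v'"
    "walk_gf V E {u} x y = walk_gf V' E' {u'} x' y'"
    "walk_gf V E {u} v y = walk_gf V' E' {u'} v' y'"
proof -
  note gf = wl_stable_eq_walk_gf[OF fin]
  obtain x' where x': "x' \<in> V'"
    and "\<And>i. i < length (u # v # v # t) \<Longrightarrow>
      wl_stable V E c ((u # v # v # t)[i := x]) = wl_stable V' E' c' ((u' # v' # v' # t')[i := x'])"
    using wl_stable_eq_extend[OF fin eq, of x] xy(1) by blast
  from this(2)[of 2]
  have eq1: "wl_stable V E c (u # v # x # t) = wl_stable V' E' c' (u' # v' # x' # t')"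
    by (simp add: numeral_2_eq_2)
  obtain y' where y': "y' \<in> V'"
    and "\<And>i. i < length (u # v # x # t) \<Longrightarrow>
      wl_stable V E c ((u # v # x # t)[i := y]) = wl_stable V' E' c' ((u' # v' # x' # t')[i := y'])"
    using wl_stable_eq_extend[OF fin eq1, of y] xy(2) by blast
  from this(2)[of 1] this(2)[of 2]
  have eq2: "wl_stable V E c (u # y # x # t) = wl_stable V' E' c' (u' # y' # x' # t')"
    and eq3: "wl_stable V E c (u # v # y # t) = wl_stable V' E' c' (u' # v' # y' # t')"
    by (simp_all add: numeral_2_eq_2)
  have "x' \<notin> {u', v'}"
    using atp_eqD(2)[OF wl_stable_eq_atp[OF eq1], of 2 0] atp_eqD(2)[OF wl_stable_eq_atp[OF eq1], of 2 1] xy(1)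
    by (auto simp: numeral_2_eq_2)
  moreover have "y' \<notin> {u', v'}"
    using atp_eqD(2)[OF wl_stable_eq_atp[OF eq3], of 2 0] atp_eqD(2)[OF wl_stable_eq_atp[OF eq3], of 2 1] xy(2)
    by (auto simp: numeral_2_eq_2)
  moreover have "walk_gf V E {u} v v = walk_gf V' E' {u'} v' v'"
    using gf[OF eq, of 0 1 2] sub by (simp add: numeral_2_eq_2)
  moreover have "walk_gf V E {u} x v = walk_gf V' E' {u'} x' v'"
    using gf[OF eq1, of 0 2 1] sub xy x' by (simp add: numeral_2_eq_2)
  moreover have "walk_gf V E {u} x y = walk_gf V' E' {u'} x' y'"
    using gf[OF eq2, of 0 2 1] sub xy x' y' by (simp add: numeral_2_eq_2)
  moreover have "walk_gf V E {u} v y = walk_gf V' E' {u'} v' y'"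
    using gf[OF eq3, of 0 1 2] sub xy y' by (simp add: numeral_2_eq_2)
  ultimately show ?thesis using that x' y' by blast
qed

lemma wl_color_pair:
  "k \<ge> 3 \<Longrightarrow> wl_color V E c k [u, v] = wl_stable V E c (u # v # v # replicate (k - 3) v)"
  by (simp add: wl_color_def numeral_3_eq_3 replicate_Suc[symmetric] Suc_diff_Suc)

theorem corollary14:
  fixes VG :: "'a set" and EG :: "'a \<Rightarrow> 'a \<Rightarrow> bool" and colG :: "'a \<Rightarrow> 'c"
    and VH :: "'b set" and EH :: "'b \<Rightarrow> 'b \<Rightarrow> bool" and colH :: "'b \<Rightarrow> 'c"
    and k :: nat and u v :: 'a and u' v' :: 'b
  assumes "k \<ge> 3"
    and "graph VG EG" and "graph VH EH"
    and "two_connected VG EG" and "two_connected VH EH"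
    and "u \<in> VG" and "v \<in> VG" and "u' \<in> VH" and "v' \<in> VH"
    and "\<not> connected_on (VG - {u, v}) EG"
    and "connected_on (VH - {u', v'}) EH"
  shows "wl_color VG EG colG k [u, v] \<noteq> wl_color VH EH colH k [u', v']"
proof
  assume "wl_color VG EG colG k [u, v] = wl_color VH EH colH k [u', v']"
  then have eq: "wl_stable VG EG colG (u # v # v # replicate (k - 3) v)
      = wl_stable VH EH colH (u' # v' # v' # replicate (k - 3) v')"
    using assms(1) by (simp add: wl_color_pair)
  have fin: "finite VG" "finite VH" using assms(2,3) by (simp_all add: graph_def)
  have "u \<noteq> v" using assms(4,6,10) by (auto simp: two_connected_def)
  then have "u' \<noteq> v'" using atp_eqD(2)[OF wl_stable_eq_atp[OF eq], of 0 1] by simp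
  obtain x y where xy: "x \<in> VG - {u, v}" "y \<in> VG - {u, v}"
    and separated: "(x, y) \<notin> (induced_edges (VG - {u, v}) EG)\<^sup>*"
    using assms(10) unfolding connected_on_def by blast
  obtain x' y' where x'y': "x' \<in> VH - {u', v'}" "y' \<in> VH - {u', v'}"
    and "walk_gf VG EG {u} v v = walk_gf VH EH {u'} v' v'"
      "walk_gf VG EG {u} x v = walk_gf VH EH {u'} x' v'"
      "walk_gf VG EG {u} x y = walk_gf VH EH {u'} x' y'"
      "walk_gf VG EG {u} v y = walk_gf VH EH {u'} v' y'"
  proof (rule wl_stable_eq_transfer_walk_gfs[OF fin eq _ _ xy])
    show "set (u # v # replicate (k - 3) v) \<subseteq> VG" "set (u' # v' # replicate (k - 3) v') \<subseteq> VH"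
      using assms(6-9) by auto
  qed
  moreover have "walk_gf VG EG {u} x y * walk_gf VG EG {u} v v
      = walk_gf VG EG {u} x v * walk_gf VG EG {u} v y"
    using walk_gf_product_identity_iff_separated[OF fin(1), of v "{u}" x EG y] xy separated
      \<open>u \<noteq> v\<close> assms(7) by (simp add: insert_commute)
  ultimately have "walk_gf VH EH {u'} x' y' * walk_gf VH EH {u'} v' v'
      = walk_gf VH EH {u'} x' v' * walk_gf VH EH {u'} v' y'" by simp
  then have "(x', y') \<notin> (induced_edges (VH - {u', v'}) EH)\<^sup>*"
    using walk_gf_product_identity_iff_separated[OF fin(2), of v' "{u'}" x' EH y'] x'y'
      \<open>u' \<noteq> v'\<close> assms(9) by (simp add: insert_commute)
  with assms(11) x'y' show False unfolding connected_on_def by blast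
qed

end
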